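(* The AMC (allocating marginal contributions) policy has competitive ratio $\alpha=\frac{2\mathsf{min}}{\mathsf{max}}$ with respect to greedy players when the characteristic functions range over $V_{\ge2}$.
   Context: Players: a finite set $N=\{a_1,\dots,a_n\}$. A characteristic function is $v:2^N\to\mathbb{R}_{\ge 0}$ with $v(\emptyset)=0$. There are fixed, known constants $0<\mathsf{min}\le\mathsf{max}$ and every $v$ considered is monotone and bounded: $\mathsf{min}\le v(S)\le v(T)\le\mathsf{max}$ for all nonempty $S\subseteq T\subseteq N$. For an integer $\delta\ge1$, $V_\delta$ denotes the set of such $v$ with $\delta\cdot\mathsf{min}\le\mathsf{max}<(\delta+1)\cdot\mathsf{min}$, and $V_{\ge2}=\bigcup_{\delta\ge2}V_\delta$. A coalition structure is a partition $C$ of $N$; its social welfare is $\mathsf{SW}(C\mid v)=\sum_{S\in C}v(S)$. Online process: an arrival order is a permutation $\pi=(\pi_1,\dots,\pi_n)$ of $N$; player $\pi_t$ arrives at time $t$; $\pi_{\prec t}$ is the set of players arriving before time $t$ and $\pi^{-1}(i)$ is the arrival time of $i$. For $S\subseteq N$, $\pi_{|S}$ denotes the players of $S$ in the relative order of $\pi$. Let $C^{t-1}$ be the coalition structure of players arrived before time $t$ ($C^0=\emptyset$). At time $t$, player $\pi_t$ either joins an existing coalition $S\in C^{t-1}$ or forms $\{\pi_t\}$ (choice $S=\emptyset$); decisions are never revised. A distribution policy $\varphi$ assigns to every $S\subseteq N$ and order $\pi_{|S}$ a vector $(\varphi_i(S,\pi_{|S}))_{i\in S}$ summing to $v(S)$.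 The AMC policy is $\varphi_i(S,\pi_{|S})=v\big((\pi_{\prec\pi^{-1}(i)}\cap S)\cup\{i\}\big)-v\big(\pi_{\prec\pi^{-1}(i)}\cap S\big)$ for $i\in S$ (each player receives her marginal contribution at the time she joins). Greedy players: $\pi_t$ chooses $S^*\in\arg\max_{S\in C^{t-1}\cup\{\emptyset\}}\varphi_{\pi_t}(S\cup\{\pi_t\},\pi_{|S\cup\{\pi_t\}})$ (predetermined tie-breaking). $C_g(v,\pi\mid\varphi)$ is the final structure. The competitive ratio over a class is $\alpha=\inf_{v,\pi}\mathsf{SW}(C_g(v,\pi\mid\varphi))/\max_C\mathsf{SW}(C\mid v)$, over $v$ in the class and all arrival orders $\pi$. *)

theory Defs
  imports "HOL-Analysis.Analysis" "HOL-Library.Disjoint_Sets"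
begin

definition players :: "nat \<Rightarrow> nat set" where
  "players n = {0..<n}"

definition arrival_order :: "nat \<Rightarrow> nat list \<Rightarrow> bool" where
  "arrival_order n \<pi> \<longleftrightarrow> distinct \<pi> \<and> set \<pi> = players n"

definition before :: "nat list \<Rightarrow> nat \<Rightarrow> nat set" where
  "before \<pi> i = set (takeWhile (\<lambda>j. j \<noteq> i) \<pi>)"

definition valid_cf :: "real \<Rightarrow> real \<Rightarrow> nat \<Rightarrow> (nat set \<Rightarrow> real) \<Rightarrow> bool" where
  "valid_cf mn mx n v \<longleftrightarrow> v {} = 0 \<and>
     (\<forall>S T. S \<noteq> {} \<and> S \<subseteq> T \<and> T \<subseteq> players n \<longrightarrow> mn \<le> v S \<and> v S \<le> v T \<and> v T \<le> mx)"

text \<open>The class V_delta and V_{>=2} (membership depends only on the constants).\<close>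
definition V_delta :: "real \<Rightarrow> real \<Rightarrow> nat \<Rightarrow> nat \<Rightarrow> (nat set \<Rightarrow> real) \<Rightarrow> bool" where
  "V_delta mn mx \<delta> n v \<longleftrightarrow> valid_cf mn mx n v \<and> real \<delta> * mn \<le> mx \<and> mx < (real \<delta> + 1) * mn"

definition V_ge2 :: "real \<Rightarrow> real \<Rightarrow> nat \<Rightarrow> (nat set \<Rightarrow> real) \<Rightarrow> bool" where
  "V_ge2 mn mx n v \<longleftrightarrow> (\<exists>\<delta>\<ge>2. V_delta mn mx \<delta> n v)"

definition amc :: "(nat set \<Rightarrow> real) \<Rightarrow> nat list \<Rightarrow> nat set \<Rightarrow> nat \<Rightarrow> real" where
  "amc v \<pi> S i = v ((before \<pi> i \<inter> S) \<union> {i}) - v (before \<pi> i \<inter> S)"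

text \<open>A tie-breaking rule picks, given the current structure, the arriving player and
  the set of maximising options, one of those options.\<close>
definition valid_tb :: "(nat set set \<Rightarrow> nat \<Rightarrow> nat set set \<Rightarrow> nat set) \<Rightarrow> bool" where
  "valid_tb tb \<longleftrightarrow> (\<forall>C i A. A \<noteq> {} \<longrightarrow> tb C i A \<in> A)"

definition greedy_step ::
  "(nat set \<Rightarrow> real) \<Rightarrow> nat list \<Rightarrow> (nat set set \<Rightarrow> nat \<Rightarrow> nat set set \<Rightarrow> nat set)
   \<Rightarrow> nat set set \<Rightarrow> nat \<Rightarrow> nat set set" where
  "greedy_step v \<pi> tb C i =
     (let opts = C \<union> {{}};
          val = (\<lambda>S. amc v \<pi> (S \<union> {i}) i);
          A = {S \<in> opts. \<forall>S'\<in>opts. val S' \<le> val S};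
          S' = tb C i A
      in (C - {S'}) \<union> {S' \<union> {i}})"

fun greedy_run ::
  "(nat set \<Rightarrow> real) \<Rightarrow> nat list \<Rightarrow> (nat set set \<Rightarrow> nat \<Rightarrow> nat set set \<Rightarrow> nat set)
   \<Rightarrow> nat set set \<Rightarrow> nat list \<Rightarrow> nat set set" where
  "greedy_run v \<pi> tb C [] = C"
| "greedy_run v \<pi> tb C (i # is) = greedy_run v \<pi> tb (greedy_step v \<pi> tb C i) is"

definition greedy_cs ::
  "(nat set \<Rightarrow> real) \<Rightarrow> nat list \<Rightarrow> (nat set set \<Rightarrow> nat \<Rightarrow> nat set set \<Rightarrow> nat set) \<Rightarrow> nat set set" where
  "greedy_cs v \<pi> tb = greedy_run v \<pi> tb {} \<pi>"

definition SW :: "(nat set \<Rightarrow> real) \<Rightarrow> nat set set \<Rightarrow> real" where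
  "SW v C = (\<Sum>S\<in>C. v S)"

definition OPT :: "(nat set \<Rightarrow> real) \<Rightarrow> nat \<Rightarrow> real" where
  "OPT v n = Max (SW v ` {C. partition_on (players n) C})"

definition comp_ratio_ge2 ::
  "real \<Rightarrow> real \<Rightarrow> (nat set set \<Rightarrow> nat \<Rightarrow> nat set set \<Rightarrow> nat set) \<Rightarrow> real" where
  "comp_ratio_ge2 mn mx tb =
     Inf {SW v (greedy_cs v \<pi> tb) / OPT v n | n v \<pi>.
            n \<ge> 1 \<and> V_ge2 mn mx n v \<and> arrival_order n \<pi>}"

end

(*
  Under AMC the shares inside a coalition telescope to its value, and a
  greedy player never accepts less than the share v {j} >= min she would get alone.
  Hence the greedy welfare is the total of an individually rational payoff vector q
  with q j >= min. For a block B of an optimal structure, 2 min v B <= max * sum q B: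
  for a singleton because v {j} <= q j, otherwise because B is worth at most max while
  its members hold at least 2 min.

  Let players 0..s-1 be "low" and s..2s-1 "high", arriving in this order.
  A bonus eta per member lures the low players into one growing coalition; afterwards a
  high player gains less than min by joining it and nothing by joining another high
  player, so all high players stay alone. Pairing each i with i + s instead is worth
  s max. Taking s as large as s min < max allows and eta -> 0, the ratio tends to
  2 min / max; for max = 2 min the one-player game already has ratio 1.
*)
theory Submission
  imports Defs
begin

lemma before_append_Cons:
  assumes "distinct (ys @ i # zs)"
  shows "before (ys @ i # zs) i = set ys"
proof -
  have "takeWhile (\<lambda>j. j \<noteq> i) (ys @ i # zs) = ys"
    using assms by (subst takeWhile_append2) auto
  then show ?thesis by (simp add: before_def)
qed

lemma not_in_before: "i \<notin> before \<pi> i"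
  by (auto simp: before_def dest: set_takeWhileD)

lemma finite_before [simp]: "finite (before \<pi> i)"
  by (simp add: before_def)

lemma before_upt:
  assumes "i < m"
  shows "before [0..<m] i = {0..<i}"
proof -
  have "[0..<m] = [0..<i] @ [i..<m]"
    using upt_add_eq_append[of 0 i "m - i"] assms by simp
  also have "[i..<m] = i # [Suc i..<m]"
    using assms by (simp add: upt_conv_Cons)
  finally have upt_split: "[0..<m] = [0..<i] @ i # [Suc i..<m]" .
  have "distinct ([0..<i] @ i # [Suc i..<m])"
    by (simp flip: upt_split)
  then show ?thesis
    by (simp add: upt_split before_append_Cons)
qed

lemma amc_eq_marginal:
  assumes "S \<subseteq> before \<pi> i"
  shows "amc v \<pi> (S \<union> {i}) i = v (S \<union> {i}) - v S"
proof -
  have "before \<pi> i \<inter> (S \<union> {i}) = S"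
    using assms not_in_before[of i \<pi>] by auto
  then show ?thesis by (simp add: amc_def)
qed

lemma greedy_run_append:
  "greedy_run v \<pi> tb C (xs @ ys) = greedy_run v \<pi> tb (greedy_run v \<pi> tb C xs) ys"
  by (induction xs arbitrary: C) auto

lemma greedy_step_choice:
  assumes tb: "valid_tb tb" and fin: "finite C"
  obtains S where "S \<in> insert {} C"
    and "\<And>T. T \<in> insert {} C \<Longrightarrow> amc v \<pi> (T \<union> {i}) i \<le> amc v \<pi> (S \<union> {i}) i"
    and "greedy_step v \<pi> tb C i = insert (S \<union> {i}) (C - {S})"
proof -
  define val where "val T = amc v \<pi> (T \<union> {i}) i" for T
  define A where "A = {S \<in> insert {} C. \<forall>T\<in>insert {} C. val T \<le> val S}"
  have max_ge: "val T \<le> Max (val ` insert {} C)" if "T \<in> insert {} C" for T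
    using fin that by (intro Max_ge) auto
  have "Max (val ` insert {} C) \<in> val ` insert {} C"
    using fin by (intro Max_in) auto
  then obtain X where "X \<in> insert {} C" "Max (val ` insert {} C) = val X"
    by (rule imageE)
  then have "X \<in> A"
    using max_ge unfolding A_def by simp
  then have "tb C i A \<in> A"
    using tb unfolding valid_tb_def by blast
  moreover have "greedy_step v \<pi> tb C i = insert (tb C i A \<union> {i}) (C - {tb C i A})"
    unfolding greedy_step_def Let_def A_def val_def by simp
  ultimately show thesis
    by (intro that[of "tb C i A"]) (auto simp: A_def val_def)
qed

lemma greedy_step_unique_max:
  assumes "valid_tb tb" "finite C" and X: "X \<in> insert {} C"
    and less: "\<And>S. S \<in> insert {} C \<Longrightarrow> S \<noteq> X \<Longrightarrow>
      amc v \<pi> (S \<union> {i}) i < amc v \<pi> (X \<union> {i}) i"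
  shows "greedy_step v \<pi> tb C i = insert (X \<union> {i}) (C - {X})"
proof -
  obtain S where "S \<in> insert {} C" "amc v \<pi> (X \<union> {i}) i \<le> amc v \<pi> (S \<union> {i}) i"
    and step: "greedy_step v \<pi> tb C i = insert (S \<union> {i}) (C - {S})"
    using greedy_step_choice[OF assms(1,2)] X by metis
  then have "S = X"
    using less by force
  then show ?thesis
    using step by simp
qed

definition indiv_rational_payoff ::
  "(nat set \<Rightarrow> real) \<Rightarrow> nat set \<Rightarrow> nat set set \<Rightarrow> (nat \<Rightarrow> real) \<Rightarrow> bool" where
  "indiv_rational_payoff v P C q \<longleftrightarrow> sum q P = SW v C \<and> (\<forall>j\<in>P. v {j} \<le> q j)"

lemma greedy_step_payoff:
  assumes tb: "valid_tb tb" and v0: "v {} = 0"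
    and sub: "\<forall>S\<in>C. S \<subseteq> before \<pi> i"
    and q: "indiv_rational_payoff v (before \<pi> i) C q"
  shows "\<forall>S\<in>greedy_step v \<pi> tb C i. S \<subseteq> insert i (before \<pi> i)"
    and "\<exists>q'. indiv_rational_payoff v (insert i (before \<pi> i)) (greedy_step v \<pi> tb C i) q'"
proof -
  let ?P = "before \<pi> i"
  have "C \<subseteq> Pow ?P"
    using sub by auto
  then have "finite C"
    by (rule finite_subset) simp
  then obtain S where S: "S \<in> insert {} C"
    and max: "\<And>T. T \<in> insert {} C \<Longrightarrow> amc v \<pi> (T \<union> {i}) i \<le> amc v \<pi> (S \<union> {i}) i"
    and step: "greedy_step v \<pi> tb C i = insert (S \<union> {i}) (C - {S})"
    using greedy_step_choice[OF tb] by metis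
  have SP: "S \<subseteq> ?P"
    using S sub by auto
  show "\<forall>S'\<in>greedy_step v \<pi> tb C i. S' \<subseteq> insert i ?P"
    using step sub SP by auto
  have i_notin: "i \<notin> ?P"
    by (rule not_in_before)
  define q' where "q' = q(i := v (S \<union> {i}) - v S)"
  have "v {i} \<le> q' i"
    using max[of "{}"] amc_eq_marginal[of "{}" \<pi> i v] amc_eq_marginal[OF SP, of v] v0
    by (simp add: q'_def)
  then have rational: "\<forall>j\<in>insert i ?P. v {j} \<le> q' j"
    using q by (simp add: indiv_rational_payoff_def q'_def)
  have "SW v (C - {S}) = SW v C - v S"
    using S \<open>finite C\<close> v0 by (cases "S \<in> C") (auto simp: SW_def sum_diff1)
  moreover have "S \<union> {i} \<notin> C - {S}"
    using sub i_notin by auto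
  ultimately have "SW v (greedy_step v \<pi> tb C i) = SW v C - v S + v (S \<union> {i})"
    using step \<open>finite C\<close> by (simp add: SW_def)
  also have "\<dots> = sum q ?P + q' i"
    using q by (simp add: indiv_rational_payoff_def q'_def)
  also have "sum q ?P = sum q' ?P"
    using i_notin by (intro sum.cong) (auto simp: q'_def)
  also have "sum q' ?P + q' i = sum q' (insert i ?P)"
    using i_notin by simp
  finally show "\<exists>q'. indiv_rational_payoff v (insert i ?P) (greedy_step v \<pi> tb C i) q'"
    using rational unfolding indiv_rational_payoff_def by auto
qed

lemma greedy_run_payoff:
  assumes tb: "valid_tb tb" and v0: "v {} = 0" and dist: "distinct \<pi>"
  shows "\<pi> = ys @ xs \<Longrightarrow> \<forall>S\<in>C. S \<subseteq> set ys \<Longrightarrow> indiv_rational_payoff v (set ys) C q \<Longrightarrow>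
    \<exists>q'. indiv_rational_payoff v (set \<pi>) (greedy_run v \<pi> tb C xs) q'"
proof (induction xs arbitrary: ys C q)
  case Nil
  then show ?case by auto
next
  case (Cons i xs)
  have before: "before \<pi> i = set ys"
    using Cons.prems(1) dist by (simp add: before_append_Cons)
  obtain q' where "indiv_rational_payoff v (set (ys @ [i])) (greedy_step v \<pi> tb C i) q'"
    using greedy_step_payoff(2)[where v=v, OF tb v0, of C \<pi> i q] Cons.prems before by auto
  moreover have "\<forall>S\<in>greedy_step v \<pi> tb C i. S \<subseteq> set (ys @ [i])"
    using greedy_step_payoff(1)[where v=v, OF tb v0, of C \<pi> i q] Cons.prems before by auto
  ultimately show ?case
    using Cons.IH[of "ys @ [i]"] Cons.prems(1) by auto
qed

lemma greedy_cs_payoff: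
  assumes "valid_tb tb" "v {} = 0" "arrival_order n \<pi>"
  obtains q where "indiv_rational_payoff v (players n) (greedy_cs v \<pi> tb) q"
  using greedy_run_payoff[where v=v, OF assms(1,2), of \<pi> "[]" \<pi> "{}" "\<lambda>_. 0"] assms(3)
  by (auto simp: arrival_order_def greedy_cs_def indiv_rational_payoff_def SW_def)

lemma valid_cf_bounds:
  assumes "valid_cf mn mx n v" "S \<noteq> {}" "S \<subseteq> players n"
  shows "mn \<le> v S" "v S \<le> mx"
  using assms unfolding valid_cf_def by blast+

lemma valid_cf_coalition_le_payoff:
  assumes vc: "valid_cf mn mx n v" and mn: "0 < mn" and mx: "2 * mn \<le> mx"
    and B: "B \<noteq> {}" "B \<subseteq> players n" and q: "\<forall>j\<in>B. v {j} \<le> q j"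
  shows "2 * mn * v B \<le> mx * sum q B"
proof (cases "card B = 1")
  case True
  then obtain j where j: "B = {j}"
    by (rule card_1_singletonE)
  have "0 \<le> v {j}"
    using valid_cf_bounds(1)[OF vc, of "{j}"] B j mn by simp
  then have "2 * mn * v {j} \<le> mx * v {j}"
    using mx by (intro mult_right_mono)
  also have "\<dots> \<le> mx * q j"
    using q j mx mn by (intro mult_left_mono) auto
  finally show ?thesis
    using j by simp
next
  case False
  have "finite B"
    using B(2) finite_subset by (auto simp: players_def)
  then have "2 \<le> card B"
    using False B(1) by (cases "card B") auto
  have "2 * mn \<le> real (card B) * mn"
    using \<open>2 \<le> card B\<close> mn by (intro mult_right_mono) auto
  also have "\<dots> = (\<Sum>j\<in>B. mn)"
    by simp
  also have "\<dots> \<le> sum q B"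
  proof (rule sum_mono)
    fix j assume "j \<in> B"
    then show "mn \<le> q j"
      using q valid_cf_bounds(1)[OF vc, of "{j}"] B(2) by force
  qed
  finally have "2 * mn \<le> sum q B" .
  have "2 * mn * v B \<le> 2 * mn * mx"
    using valid_cf_bounds(2)[OF vc B] mn by simp
  also have "\<dots> \<le> mx * sum q B"
    using \<open>2 * mn \<le> sum q B\<close> mn mx by (simp add: mult.commute mult_left_mono)
  finally show ?thesis .
qed

lemma finite_partitions_players: "finite {C. partition_on (players n) C}"
  by (rule finitely_many_partition_on) (simp add: players_def)

lemma SW_le_OPT: "partition_on (players n) C \<Longrightarrow> SW v C \<le> OPT v n"
  unfolding OPT_def using finite_partitions_players by (intro Max_ge) auto

lemma OPT_attained:
  obtains C where "partition_on (players n) C" "OPT v n = SW v C"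
proof -
  have "\<exists>C. partition_on (players n) C"
    by (cases "players n = {}") (auto simp: partition_on_empty intro: partition_on_space)
  then have "OPT v n \<in> SW v ` {C. partition_on (players n) C}"
    unfolding OPT_def using finite_partitions_players by (intro Max_in) auto
  then show thesis
    using that by blast
qed

lemma valid_cf_OPT_pos:
  assumes "valid_cf mn mx n v" "0 < mn" "1 \<le> n"
  shows "0 < OPT v n"
proof -
  have "players n \<noteq> {}"
    using assms(3) by (auto simp: players_def)
  then have "v (players n) \<le> OPT v n"
    using SW_le_OPT[OF partition_on_space] by (simp add: SW_def)
  then show ?thesis
    using valid_cf_bounds(1)[OF assms(1) \<open>players n \<noteq> {}\<close>] assms(2) by simp
qed

lemma valid_cf_partition_le_payoff:
  assumes vc: "valid_cf mn mx n v" and mn: "0 < mn" and mx: "2 * mn \<le> mx"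
    and part: "partition_on (players n) Cs"
    and q: "indiv_rational_payoff v (players n) C q"
  shows "2 * mn * SW v Cs \<le> mx * SW v C"
proof -
  have fin: "finite (players n)"
    by (simp add: players_def)
  have blocks: "B \<noteq> {}" "B \<subseteq> players n" "finite B" if "B \<in> Cs" for B
    using part that fin by (auto simp: partition_on_def intro: finite_subset)
  have "2 * mn * SW v Cs = (\<Sum>B\<in>Cs. 2 * mn * v B)"
    by (simp add: SW_def sum_distrib_left)
  also have "\<dots> \<le> (\<Sum>B\<in>Cs. mx * sum q B)"
    using q blocks by (intro sum_mono valid_cf_coalition_le_payoff[OF vc mn mx])
      (auto simp: indiv_rational_payoff_def subset_iff)
  also have "\<dots> = mx * sum q (\<Union>Cs)"
    using blocks partition_onD2[OF part]
    by (simp add: sum_distrib_left sum.Union_disjoint pairwise_def disjnt_def)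
  also have "\<dots> = mx * SW v C"
    using q part by (simp add: indiv_rational_payoff_def partition_on_def)
  finally show ?thesis .
qed

lemma greedy_ratio_ge:
  assumes mn: "0 < mn" and mx: "2 * mn \<le> mx" and vc: "valid_cf mn mx n v"
    and n: "1 \<le> n" and tb: "valid_tb tb" and \<pi>: "arrival_order n \<pi>"
  shows "2 * mn / mx \<le> SW v (greedy_cs v \<pi> tb) / OPT v n"
proof -
  obtain q where q: "indiv_rational_payoff v (players n) (greedy_cs v \<pi> tb) q"
    using greedy_cs_payoff[OF tb _ \<pi>] vc by (auto simp: valid_cf_def)
  obtain Cs where "partition_on (players n) Cs" "OPT v n = SW v Cs"
    by (rule OPT_attained)
  then have "2 * mn * OPT v n \<le> mx * SW v (greedy_cs v \<pi> tb)"
    using valid_cf_partition_le_payoff[OF vc mn mx _ q] by simp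
  moreover have "0 < OPT v n"
    by (rule valid_cf_OPT_pos[OF vc mn n])
  ultimately show ?thesis
    using mn mx by (simp add: divide_le_eq le_divide_eq mult.commute)
qed

definition chain_value :: "real \<Rightarrow> real \<Rightarrow> nat \<Rightarrow> real" where
  "chain_value mn \<eta> k = real k * (mn + \<eta>) - \<eta>"

definition trap_cf :: "real \<Rightarrow> real \<Rightarrow> real \<Rightarrow> nat \<Rightarrow> nat set \<Rightarrow> real" where
  "trap_cf mn mx \<eta> s S =
    (if S = {} then 0
     else if \<exists>i<s. i \<in> S \<and> i + s \<in> S then mx
     else chain_value mn \<eta> (max 1 (card (S \<inter> {..<s}))))"

lemma chain_value_mono:
  "0 \<le> mn + \<eta> \<Longrightarrow> k \<le> l \<Longrightarrow> chain_value mn \<eta> k \<le> chain_value mn \<eta> l"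
  unfolding chain_value_def by (intro diff_right_mono mult_right_mono) auto

lemma chain_value_1 [simp]: "chain_value mn \<eta> 1 = mn"
  by (simp add: chain_value_def)

lemma chain_value_Suc: "chain_value mn \<eta> (Suc k) = chain_value mn \<eta> k + (mn + \<eta>)"
  by (simp add: chain_value_def algebra_simps)

lemma trap_cf_bounds:
  assumes "0 < mn" "0 < \<eta>" "chain_value mn \<eta> s \<le> mx" "1 \<le> s" "S \<noteq> {}"
  shows "mn \<le> trap_cf mn mx \<eta> s S" "trap_cf mn mx \<eta> s S \<le> mx"
proof -
  let ?k = "max 1 (card (S \<inter> {..<s}))"
  have "card (S \<inter> {..<s}) \<le> s"
    using card_mono[of "{..<s}" "S \<inter> {..<s}"] by auto
  then have "chain_value mn \<eta> 1 \<le> chain_value mn \<eta> ?k" "chain_value mn \<eta> ?k \<le> chain_value mn \<eta> s"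
    using assms by (intro chain_value_mono; simp)+
  then have "mn \<le> chain_value mn \<eta> ?k" "chain_value mn \<eta> ?k \<le> mx"
    using assms(3) by (simp_all only: chain_value_1)
  then show "mn \<le> trap_cf mn mx \<eta> s S" "trap_cf mn mx \<eta> s S \<le> mx"
    using assms by (auto simp: trap_cf_def)
qed

lemma trap_cf_mono:
  assumes "0 < mn" "0 < \<eta>" "chain_value mn \<eta> s \<le> mx" "1 \<le> s" "S \<noteq> {}" "S \<subseteq> T"
  shows "trap_cf mn mx \<eta> s S \<le> trap_cf mn mx \<eta> s T"
proof (cases "\<exists>i<s. i \<in> T \<and> i + s \<in> T")
  case True
  then show ?thesis
    using trap_cf_bounds(2)[OF assms(1-5)] assms(5,6) by (auto simp: trap_cf_def)
next
  case False
  then have "\<not> (\<exists>i<s. i \<in> S \<and> i + s \<in> S)"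
    using assms(6) by blast
  moreover have "card (S \<inter> {..<s}) \<le> card (T \<inter> {..<s})"
    using assms(6) by (intro card_mono) auto
  ultimately show ?thesis
    using False assms by (auto simp: trap_cf_def intro!: chain_value_mono)
qed

lemma trap_cf_valid:
  assumes "0 < mn" "0 < \<eta>" "chain_value mn \<eta> s \<le> mx" "1 \<le> s"
  shows "valid_cf mn mx (2 * s) (trap_cf mn mx \<eta> s)"
  unfolding valid_cf_def
  using trap_cf_bounds[OF assms] trap_cf_mono[OF assms] by (auto simp: trap_cf_def)

lemma trap_cf_empty [simp]: "trap_cf mn mx \<eta> s {} = 0"
  by (simp add: trap_cf_def)

lemma trap_cf_singleton: "1 \<le> s \<Longrightarrow> trap_cf mn mx \<eta> s {t} = mn"
  using card_mono[of "{t}" "{t} \<inter> {..<s}"] by (auto simp: trap_cf_def chain_value_def max_def)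

lemma trap_cf_low:
  assumes "1 \<le> k" "k \<le> s"
  shows "trap_cf mn mx \<eta> s {0..<k} = chain_value mn \<eta> k"
proof -
  have "{0..<k} \<inter> {..<s} = {0..<k}"
    using assms(2) by auto
  then show ?thesis
    using assms by (auto simp: trap_cf_def max_def)
qed

lemma trap_cf_low_high: "j < s \<Longrightarrow> trap_cf mn mx \<eta> s ({0..<s} \<union> {s + j}) = mx"
  by (auto simp: trap_cf_def)

lemma trap_cf_high_pair: "s \<le> t \<Longrightarrow> s \<le> u \<Longrightarrow> trap_cf mn mx \<eta> s ({t} \<union> {u}) = mn"
  by (auto simp: trap_cf_def chain_value_def)

lemma trap_cf_matched_pair: "i < s \<Longrightarrow> trap_cf mn mx \<eta> s {i, i + s} = mx"
  by (auto simp: trap_cf_def)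

lemma greedy_run_trap_low:
  assumes tb: "valid_tb tb" and "0 < \<eta>"
  shows "1 \<le> k \<Longrightarrow> k \<le> s \<Longrightarrow>
    greedy_run (trap_cf mn mx \<eta> s) [0..<2 * s] tb {} [0..<k] = {{0..<k}}"
proof (induction k rule: nat_induct_at_least)
  case base
  have "greedy_step (trap_cf mn mx \<eta> s) [0..<2 * s] tb {} 0 = insert ({} \<union> {0}) ({} - {{}})"
    by (rule greedy_step_unique_max[OF tb]) auto
  then show ?case
    by auto
next
  case (Suc k)
  let ?v = "trap_cf mn mx \<eta> s" and ?\<pi> = "[0..<2 * s]"
  have before: "before ?\<pi> k = {0..<k}"
    using Suc by (intro before_upt) simp
  have "amc ?v ?\<pi> ({} \<union> {k}) k = mn"
    using amc_eq_marginal[of "{}" ?\<pi> k ?v] Suc trap_cf_singleton[of s] by simp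
  moreover have "amc ?v ?\<pi> ({0..<k} \<union> {k}) k = mn + \<eta>"
    using amc_eq_marginal[of "{0..<k}" ?\<pi> k ?v] before Suc trap_cf_low[of "Suc k" s] trap_cf_low[of k s]
    by (simp add: atLeast0_lessThan_Suc chain_value_Suc Un_commute)
  ultimately have "greedy_step ?v ?\<pi> tb {{0..<k}} k = insert ({0..<k} \<union> {k}) ({{0..<k}} - {{0..<k}})"
    using \<open>0 < \<eta>\<close> by (intro greedy_step_unique_max[OF tb]) auto
  then show ?case
    using Suc by (simp add: greedy_run_append atLeast0_lessThan_Suc)
qed

lemma greedy_run_trap_high:
  assumes tb: "valid_tb tb" and mn: "0 < mn" and \<eta>: "0 < \<eta>" and s: "1 \<le> s"
    and lure: "mx - mn < chain_value mn \<eta> s"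
  shows "j \<le> s \<Longrightarrow> greedy_run (trap_cf mn mx \<eta> s) [0..<2 * s] tb {} [0..<s + j] =
    insert {0..<s} ((\<lambda>t. {t}) ` {s..<s + j})"
proof (induction j)
  case 0
  then show ?case
    using greedy_run_trap_low[OF tb \<eta> s] by simp
next
  case (Suc j)
  let ?v = "trap_cf mn mx \<eta> s" and ?\<pi> = "[0..<2 * s]"
  let ?C = "insert {0..<s} ((\<lambda>t. {t}) ` {s..<s + j})"
  have before: "before ?\<pi> (s + j) = {0..<s + j}"
    using Suc by (intro before_upt) simp
  have alone: "amc ?v ?\<pi> ({} \<union> {s + j}) (s + j) = mn"
    using amc_eq_marginal[of "{}" ?\<pi> "s + j" ?v] trap_cf_singleton[OF s] by simp
  have "amc ?v ?\<pi> (S \<union> {s + j}) (s + j) < mn" if "S \<in> ?C" for S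
  proof -
    consider "S = {0..<s}" | t where "s \<le> t" "t < s + j" "S = {t}"
      using \<open>S \<in> ?C\<close> by auto
    then show ?thesis
    proof cases
      case 1
      have "amc ?v ?\<pi> (S \<union> {s + j}) (s + j) = mx - chain_value mn \<eta> s"
        using 1 amc_eq_marginal[of S ?\<pi> "s + j" ?v] before Suc.prems s
          trap_cf_low_high[of j s] trap_cf_low[of s s] by simp
      then show ?thesis
        using lure by simp
    next
      case 2
      have "amc ?v ?\<pi> (S \<union> {s + j}) (s + j) = 0"
        using 2 amc_eq_marginal[of S ?\<pi> "s + j" ?v] before
          trap_cf_high_pair[of s t "s + j"] trap_cf_singleton[OF s] by simp
      then show ?thesis
        using mn by simp
    qed
  qed
  then have "greedy_step ?v ?\<pi> tb ?C (s + j) = insert ({} \<union> {s + j}) (?C - {{}})"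
    using alone by (intro greedy_step_unique_max[OF tb]) auto
  also have "\<dots> = insert {0..<s} ((\<lambda>t. {t}) ` {s..<s + Suc j})"
    using s by auto
  finally show ?case
    using Suc by (simp add: greedy_run_append)
qed

lemma partition_on_matched_pairs:
  fixes s :: nat
  shows "partition_on {0..<2 * s} ((\<lambda>i. {i, i + s}) ` {0..<s})"
proof (rule partition_onI)
  show "\<Union>((\<lambda>i. {i, i + s}) ` {0..<s}) = {0..<2 * s}"
  proof (intro equalityI subsetI)
    fix x assume "x \<in> {0..<2 * s}"
    then show "x \<in> \<Union>((\<lambda>i. {i, i + s}) ` {0..<s})"
      by (cases "x < s") (auto intro!: bexI[of _ "x - s"])
  qed auto
qed (auto simp: disjnt_def)

lemma OPT_trap_cf_ge: "real s * mx \<le> OPT (trap_cf mn mx \<eta> s) (2 * s)"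
proof -
  let ?P = "(\<lambda>i. {i, i + s}) ` {0..<s}"
  have "inj_on (\<lambda>i. {i, i + s}) {0..<s}"
    by (auto simp: inj_on_def doubleton_eq_iff)
  then have "SW (trap_cf mn mx \<eta> s) ?P = real s * mx"
    by (simp add: SW_def sum.reindex trap_cf_matched_pair)
  moreover have "partition_on (players (2 * s)) ?P"
    using partition_on_matched_pairs by (simp add: players_def)
  ultimately show ?thesis
    by (metis SW_le_OPT)
qed

lemma greedy_cs_trap_cf:
  assumes "valid_tb tb" "0 < mn" "0 < \<eta>" "1 \<le> s" "mx - mn < chain_value mn \<eta> s"
  shows "greedy_cs (trap_cf mn mx \<eta> s) [0..<2 * s] tb = insert {0..<s} ((\<lambda>t. {t}) ` {s..<2 * s})"
  using greedy_run_trap_high[OF assms, of s] by (simp add: greedy_cs_def mult_2)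

lemma SW_greedy_cs_trap_cf:
  assumes "valid_tb tb" "0 < mn" "0 < \<eta>" "1 \<le> s" "mx - mn < chain_value mn \<eta> s"
  shows "SW (trap_cf mn mx \<eta> s) (greedy_cs (trap_cf mn mx \<eta> s) [0..<2 * s] tb) =
    chain_value mn \<eta> s + real s * mn"
proof -
  have "0 \<in> {0..<s}" "\<forall>t\<in>{s..<2 * s}. 0 \<notin> {t}"
    using assms(4) by auto
  then have "{0..<s} \<notin> (\<lambda>t. {t}) ` {s..<2 * s}"
    by (metis imageE)
  moreover have "sum (trap_cf mn mx \<eta> s) ((\<lambda>t. {t}) ` {s..<2 * s}) = real s * mn"
    using assms(4) by (simp add: sum.reindex trap_cf_singleton)
  ultimately show ?thesis
    using assms by (simp add: greedy_cs_trap_cf SW_def trap_cf_low)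
qed

lemma trap_cf_ratio_le:
  assumes "valid_tb tb" "0 < mn" "0 < \<eta>" "1 \<le> s"
    and "chain_value mn \<eta> s \<le> mx" "mx - mn < chain_value mn \<eta> s"
  shows "SW (trap_cf mn mx \<eta> s) (greedy_cs (trap_cf mn mx \<eta> s) [0..<2 * s] tb)
      / OPT (trap_cf mn mx \<eta> s) (2 * s)
    \<le> (chain_value mn \<eta> s + real s * mn) / (real s * mx)"
proof -
  have "mn \<le> chain_value mn \<eta> s"
    using chain_value_mono[of mn \<eta> 1 s] assms by (simp add: chain_value_def)
  then have "0 < real s * mx" "0 \<le> chain_value mn \<eta> s + real s * mn"
    using assms by auto
  then show ?thesis
    using OPT_trap_cf_ge[of s mx mn \<eta>]
    by (simp add: SW_greedy_cs_trap_cf[OF assms(1-4,6)] divide_left_mono)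
qed

lemma exists_nat_mult_less_le:
  fixes a x :: real
  assumes "0 < a" "0 < x"
  obtains s :: nat where "real s * a < x" "x \<le> (real s + 1) * a"
proof -
  define s where "s = nat (\<lceil>x / a\<rceil> - 1)"
  have "0 < x / a"
    using assms by simp
  then have "1 \<le> \<lceil>x / a\<rceil>"
    by linarith
  then have "real s = real_of_int \<lceil>x / a\<rceil> - 1"
    by (simp add: s_def)
  then have "real s < x / a" "x / a \<le> real s + 1"
    by linarith+
  then show thesis
    using assms by (intro that) (simp_all add: field_simps)
qed

lemma trap_cf_parameters:
  assumes mn: "0 < mn" and mx: "2 * mn < mx" and e: "0 < e"
  obtains s \<eta> where "1 \<le> s" "0 < \<eta>" "chain_value mn \<eta> s \<le> mx" "mx - mn < chain_value mn \<eta> s"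
    "(chain_value mn \<eta> s + real s * mn) / (real s * mx) \<le> 2 * mn / mx + e"
proof -
  \<comment> \<open>\<open>s\<close> min \<ge> max - min makes the lured coalition worth more than max - min; \<open>\<eta>\<close> keeps it
      worth at most max and bounds the excess \<open>(s - 1) \<eta> / (s max)\<close> over 2 min / max by e\<close>
  obtain s :: nat where below: "real s * mn < mx" and above: "mx \<le> (real s + 1) * mn"
    using exists_nat_mult_less_le[of mn mx] mn mx by auto
  have "2 * mn < (real s + 1) * mn"
    using above mx by simp
  then have s: "1 < real s"
    using mn by simp
  define \<eta> where "\<eta> = min ((mx - real s * mn) / (real s - 1)) (e * mx)"
  have \<eta>: "0 < \<eta>"
    using below s e mx mn by (simp add: \<eta>_def)
  have chain: "chain_value mn \<eta> s = real s * mn + (real s - 1) * \<eta>"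
    by (simp add: chain_value_def algebra_simps)
  have "(real s - 1) * \<eta> \<le> (real s - 1) * ((mx - real s * mn) / (real s - 1))"
    using s by (intro mult_left_mono) (simp_all add: \<eta>_def)
  also have "\<dots> = mx - real s * mn"
    using s by simp
  finally have "chain_value mn \<eta> s \<le> mx"
    using chain by simp
  moreover have "mx - mn < chain_value mn \<eta> s"
  proof -
    have "0 < (real s - 1) * \<eta>"
      using s \<eta> by simp
    then show ?thesis
      using chain above by (simp add: algebra_simps)
  qed
  moreover have "(chain_value mn \<eta> s + real s * mn) / (real s * mx)
      = 2 * mn / mx + (real s - 1) / real s * (\<eta> / mx)"
    using chain s mx mn by (simp add: field_simps)
  moreover have "(real s - 1) / real s * (\<eta> / mx) \<le> e"
  proof -
    have "(real s - 1) / real s * (\<eta> / mx) \<le> 1 * (\<eta> / mx)"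
      using s \<eta> mx mn by (intro mult_right_mono) auto
    also have "\<dots> \<le> e"
      using mx mn by (simp add: \<eta>_def divide_le_eq)
    finally show ?thesis .
  qed
  ultimately show thesis
    using that[of s \<eta>] s \<eta> by simp
qed

lemma cInf_eq_if_approx:
  fixes X :: "real set"
  assumes "\<And>x. x \<in> X \<Longrightarrow> a \<le> x" and "\<And>e. 0 < e \<Longrightarrow> \<exists>x\<in>X. x \<le> a + e"
  shows "Inf X = a"
proof (rule cInf_eq)
  fix y assume y: "\<And>x. x \<in> X \<Longrightarrow> y \<le> x"
  show "y \<le> a"
  proof (rule field_le_epsilon)
    fix e :: real assume "0 < e"
    then obtain x where "x \<in> X" "x \<le> a + e"
      using assms(2) by blast
    then show "y \<le> a + e"
      using y[of x] by simp
  qed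
qed (rule assms(1))

lemma greedy_ratio_one_player:
  assumes "valid_tb tb" "valid_cf mn mx 1 v" "0 < mn"
  shows "SW v (greedy_cs v [0] tb) / OPT v 1 \<le> 1"
proof -
  have "greedy_step v [0] tb {} 0 = insert ({} \<union> {0}) ({} - {{}})"
    by (rule greedy_step_unique_max[OF assms(1)]) auto
  then have greedy: "greedy_cs v [0] tb = {{0}}"
    by (simp add: greedy_cs_def)
  have "partition_on (players 1) {{0}}"
    by (simp add: players_def partition_on_space)
  then have "SW v (greedy_cs v [0] tb) \<le> OPT v 1"
    using greedy SW_le_OPT by metis
  moreover have "0 < OPT v 1"
    using valid_cf_OPT_pos[OF assms(2,3)] by simp
  ultimately show ?thesis
    by simp
qed

lemma greedy_instance_ratio_le:
  assumes mn: "0 < mn" and mx: "2 * mn \<le> mx" and tb: "valid_tb tb" and e: "0 < e"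
  obtains n v \<pi> where "1 \<le> n" "valid_cf mn mx n v" "arrival_order n \<pi>"
    "SW v (greedy_cs v \<pi> tb) / OPT v n \<le> 2 * mn / mx + e"
proof (cases "mx = 2 * mn")
  case True
  define v where "v S = (if S = {} then 0 else mn)" for S :: "nat set"
  have "valid_cf mn mx 1 v"
    using mn mx by (auto simp: valid_cf_def v_def)
  moreover have "arrival_order 1 [0]"
    by (simp add: arrival_order_def players_def)
  moreover have "SW v (greedy_cs v [0] tb) / OPT v 1 \<le> 2 * mn / mx + e"
    using greedy_ratio_one_player[OF tb \<open>valid_cf mn mx 1 v\<close> mn] True mn e by simp
  ultimately show thesis
    using that by blast
next
  case False
  then obtain s \<eta> where s: "1 \<le> s" "0 < \<eta>" "chain_value mn \<eta> s \<le> mx"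
    "mx - mn < chain_value mn \<eta> s"
    and ratio: "(chain_value mn \<eta> s + real s * mn) / (real s * mx) \<le> 2 * mn / mx + e"
    using trap_cf_parameters[OF mn _ e] mx by (metis order_le_less)
  show thesis
  proof (rule that)
    show "1 \<le> 2 * s" "arrival_order (2 * s) [0..<2 * s]"
      using s by (auto simp: arrival_order_def players_def)
    show "valid_cf mn mx (2 * s) (trap_cf mn mx \<eta> s)"
      using trap_cf_valid[OF mn s(2,3,1)] .
    show "SW (trap_cf mn mx \<eta> s) (greedy_cs (trap_cf mn mx \<eta> s) [0..<2 * s] tb)
        / OPT (trap_cf mn mx \<eta> s) (2 * s) \<le> 2 * mn / mx + e"
      using trap_cf_ratio_le[OF tb mn s(2,1,3,4)] ratio by linarith
  qed
qed

lemma V_ge2_if_valid_cf: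
  assumes mn: "0 < mn" and mx: "2 * mn \<le> mx" and vc: "valid_cf mn mx n v"
  shows "V_ge2 mn mx n v"
proof -
  define \<delta> where "\<delta> = nat \<lfloor>mx / mn\<rfloor>"
  have "2 \<le> mx / mn"
    using mn mx by (simp add: le_divide_eq)
  then have "2 \<le> \<delta>" "real \<delta> = of_int \<lfloor>mx / mn\<rfloor>"
    unfolding \<delta>_def by linarith+
  then have "real \<delta> \<le> mx / mn" "mx / mn < real \<delta> + 1"
    by linarith+
  then have "real \<delta> * mn \<le> mx" "mx < (real \<delta> + 1) * mn"
    using mn by (simp_all add: pos_le_divide_eq pos_divide_less_eq)
  then show ?thesis
    using \<open>2 \<le> \<delta>\<close> vc by (auto simp: V_ge2_def V_delta_def)
qed

theorem theorem4:
  fixes mn mx :: real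
    and tb :: "nat set set \<Rightarrow> nat \<Rightarrow> nat set set \<Rightarrow> nat set"
  assumes "0 < mn" and "mn \<le> mx" and "2 * mn \<le> mx"
    and "valid_tb tb"
  shows "comp_ratio_ge2 mn mx tb = 2 * mn / mx"
proof -
  let ?R = "{SW v (greedy_cs v \<pi> tb) / OPT v n | n v \<pi>.
    n \<ge> 1 \<and> V_ge2 mn mx n v \<and> arrival_order n \<pi>}"
  have "Inf ?R = 2 * mn / mx"
  proof (rule cInf_eq_if_approx)
    fix x assume "x \<in> ?R"
    then obtain n v \<pi> where "x = SW v (greedy_cs v \<pi> tb) / OPT v n"
      and "1 \<le> n" "V_ge2 mn mx n v" "arrival_order n \<pi>"
      by blast
    then show "2 * mn / mx \<le> x"
      using greedy_ratio_ge[OF assms(1,3) _ _ assms(4)] by (auto simp: V_ge2_def V_delta_def)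
  next
    fix e :: real assume "0 < e"
    then obtain n v \<pi> where n: "1 \<le> n" and vc: "valid_cf mn mx n v" and \<pi>: "arrival_order n \<pi>"
      and ratio: "SW v (greedy_cs v \<pi> tb) / OPT v n \<le> 2 * mn / mx + e"
      by (rule greedy_instance_ratio_le[OF assms(1,3,4)])
    have "SW v (greedy_cs v \<pi> tb) / OPT v n \<in> ?R"
      using n V_ge2_if_valid_cf[OF assms(1,3) vc] \<pi> by auto
    then show "\<exists>x\<in>?R. x \<le> 2 * mn / mx + e"
      using ratio by blast
  qed
  then show ?thesis
    by (simp add: comp_ratio_ge2_def)
qed

end
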